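(* Let $a$ be the unique positive root of $\frac{1-\ln a}{a}=\frac1e$ and $\psi_a(x)=1-(1-x)a^x$. Then for all $0<y\le1$, \[ \frac1y\,\psi_a\Big(\frac{y\,e^{1-y}}{2\,(1-y)^{1-y}}\Big)\le1. \]
   Context: Convention: $0^0=1$. *)

theory Defs
  imports Complex_Main
begin

text \<open>Real power with the convention 0^0 = 1 (Isabelle's powr has 0 powr 0 = 0).\<close>
definition rpow0 :: "real \<Rightarrow> real \<Rightarrow> real" where
  "rpow0 x t = (if x = 0 then (if t = 0 then 1 else 0) else x powr t)"

definition psi :: "real \<Rightarrow> real \<Rightarrow> real" where
  "psi a x = 1 - (1 - x) * a powr x"

end

theory Submission
  imports Defs
begin

(* Put c = ln a and x(y) = y e^(1-y) / (2 (1-y)^(1-y)).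
   (1) The root equation says 1 - c = e^(c-1); numerically this forces
       43/100 <= c < 1.
   (2) For 0 <= x <= 1 we have a^x = e^(cx) >= 1 + cx, hence
       psi a x <= (1-c) x + c x^2 <= q x  with  q x = 57/100 x + 43/100 x^2.
   (3) From (1-y) ln(1-y) >= -y + y^2/2 + y^3/6, e <= 2.719 and
       e^(-z) <= 1 - z + z^2/2 we get x(y) <= y * W y for an explicit
       polynomial W (ratio_bound below).
   (4) A finite interval subdivision of [0,1], using that W is decreasing,
       shows 57/100 W + 43/100 y W^2 <= 1, i.e. q (y W) <= y; this also
       gives y W <= 1.
   Since q is increasing, psi a x(y) <= q x(y) <= q (y W) <= y. *)

text \<open>\<open>e \<le> 2.719\<close>, from the alternating Taylor series of \<open>e\<^sup>-\<^sup>1\<close> (7 terms).\<close>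
lemma exp_one_le: "exp 1 \<le> (2719/1000::real)"
proof -
  obtain t where t: "exp (-1::real) = (\<Sum>m<8. (-1) ^ m / fact m) + exp t / fact 8 * (-1) ^ 8"
    using Maclaurin_exp_le[of "-1::real" 8] by auto
  have "(\<Sum>m<8. (-1::real) ^ m / fact m) = 103/280"
    by (simp add: eval_nat_numeral fact_Suc)
  moreover have "exp t / fact 8 * (-1::real) ^ 8 \<ge> 0" by simp
  ultimately have "exp (-1::real) \<ge> 103/280" using t by linarith
  then have "exp 1 * (103/280) \<le> exp 1 * exp (-1::real)"
    by (intro mult_left_mono) auto
  also have "exp 1 * exp (-1::real) = 1" by (simp flip: exp_add)
  finally show ?thesis by simp
qed

text \<open>A lower bound for \<open>e\<^sup>0\<^sup>.\<^sup>5\<^sup>7\<close>; it yields the lower bound \<open>ln a \<ge> 0.43\<close>.\<close>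
lemma exp_57_ge: "exp (57/100::real) \<ge> 176/100"
proof -
  obtain t where t: "exp (57/100::real) = (\<Sum>m<4. (57/100) ^ m / fact m) + exp t / fact 4 * (57/100) ^ 4"
    using Maclaurin_exp_le[of "57/100::real" 4] by auto
  have "(\<Sum>m<4. (57/100::real) ^ m / fact m) \<ge> 176/100"
    by (simp add: eval_nat_numeral fact_Suc)
  moreover have "exp t / fact 4 * (57/100::real) ^ 4 \<ge> 0" by simp
  ultimately show ?thesis using t by linarith
qed

lemma exp_neg_le_quadratic:
  assumes "0 \<le> (z::real)" shows "exp (-z) \<le> 1 - z + z^2/2"
proof -
  obtain t where t: "exp (-z) = (\<Sum>m<3. (-z) ^ m / fact m) + exp t / fact 3 * (-z) ^ 3"
    using Maclaurin_exp_le[of "-z" 3] by auto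
  have "(\<Sum>m<3. (-z) ^ m / fact m) = 1 - z + z^2/2"
    by (simp add: eval_nat_numeral fact_Suc)
  moreover have "exp t / fact 3 * (-z) ^ 3 \<le> 0"
    using assms by (simp add: mult_nonneg_nonpos)
  ultimately show ?thesis using t by linarith
qed

lemma ln_root_bounds:
  fixes a :: real
  assumes "a > 0" and "(1 - ln a) / a = 1 / exp 1"
  shows "43/100 \<le> ln a" and "ln a < 1"
proof -
  define c where "c = ln a"
  have "(1 - c) / exp c = 1 / exp 1" using assms unfolding c_def by simp
  then have "(1 - c) * exp 1 = exp c" by (simp add: field_simps)
  then have root: "1 - c = exp (c - 1)" by (simp add: exp_diff field_simps)
  then show "ln a < 1" unfolding c_def by (smt (verit) exp_gt_zero)
  show "43/100 \<le> ln a"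
  proof (rule ccontr)
    assume small: "\<not> 43/100 \<le> ln a"
    then have "exp (c - 1) < exp (-57/100)" by (simp add: c_def)
    also have "exp (-57/100::real) = 1 / exp (57/100)" by (simp add: exp_minus field_simps)
    also have "\<dots> \<le> 1 / (176/100)" using exp_57_ge by (intro divide_left_mono) auto
    finally have "1 - c < 100/176" using root by simp
    then show False using small by (simp add: c_def)
  qed
qed

text \<open>Since \<open>a\<^sup>x \<ge> 1 + x ln a\<close>, on \<open>[0,1]\<close> the function \<open>\<psi>\<^sub>a\<close> lies below a quadratic.\<close>
lemma psi_le_quadratic:
  assumes "a > 0" "0 \<le> x" "x \<le> 1"
  shows "psi a x \<le> (1 - ln a) * x + ln a * x^2"
proof -
  have "1 + ln a * x \<le> exp (ln a * x)" by (rule exp_ge_add_one_self)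
  also have "exp (ln a * x) = a powr x" using assms(1) by (simp add: powr_def mult.commute)
  finally have "(1 - x) * (1 + ln a * x) \<le> (1 - x) * a powr x"
    using assms(3) by (intro mult_left_mono) auto
  then show ?thesis unfolding psi_def by (simp add: algebra_simps power2_eq_square)
qed

text \<open>The quadratic decreases in \<open>ln a\<close> (as \<open>x\<^sup>2 \<le> x\<close>), so the lower bound on \<open>ln a\<close> applies.\<close>
lemma psi_le_q:
  assumes "a > 0" "43/100 \<le> ln a" "0 \<le> x" "x \<le> 1"
  shows "psi a x \<le> 57/100 * x + 43/100 * x^2"
proof -
  have "x^2 \<le> x" using assms(3,4) by (simp add: power2_eq_square mult_left_le)
  then have "(ln a - 43/100) * x^2 \<le> (ln a - 43/100) * x"
    using assms(2) by (intro mult_left_mono) auto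
  then show ?thesis using psi_le_quadratic[OF assms(1,3,4)] by (simp add: algebra_simps)
qed

lemma neg_ln_one_minus_ge:
  assumes "0 \<le> (y::real)" "y < 1" shows "- ln (1 - y) \<ge> y + y^2/2"
proof -
  let ?f = "\<lambda>y::real. - ln (1 - y) - y - y^2/2"
  have "?f 0 \<le> ?f y"
  proof (rule DERIV_nonneg_imp_nondecreasing[OF assms(1)])
    fix x :: real assume x: "0 \<le> x" "x \<le> y"
    have "DERIV ?f x :> (- (-1 / (1 - x)) - 1 - x)"
      using x assms by (auto intro!: derivative_eq_intros)
    moreover have "- (-1 / (1 - x)) - 1 - x = x^2 / (1 - x)"
      using x assms by (simp add: field_simps power2_eq_square)
    ultimately show "\<exists>d. DERIV ?f x :> d \<and> d \<ge> 0" using x assms by fastforce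
  qed
  then show ?thesis by simp
qed

text \<open>Integrating once more: \<open>(1-y) ln(1-y) \<ge> -y + y\<^sup>2/2 + y\<^sup>3/6\<close> on \<open>[0,1)\<close>.\<close>
lemma one_minus_mul_ln_ge:
  assumes "0 \<le> (y::real)" "y < 1"
  shows "(1 - y) * ln (1 - y) \<ge> - y + y^2/2 + y^3/6"
proof -
  let ?f = "\<lambda>y::real. (1 - y) * ln (1 - y) + y - y^2/2 - y^3/6"
  have "?f 0 \<le> ?f y"
  proof (rule DERIV_nonneg_imp_nondecreasing[OF assms(1)])
    fix x :: real assume x: "0 \<le> x" "x \<le> y"
    have "DERIV ?f x :> (- ln (1 - x) + (1 - x) * (-1 / (1 - x)) + 1 - x - x^2/2)"
      using x assms by (auto intro!: derivative_eq_intros simp: power2_eq_square)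
    moreover have "- ln (1 - x) + (1 - x) * (-1 / (1 - x)) + 1 - x - x^2/2 \<ge> 0"
      using neg_ln_one_minus_ge[of x] x assms by simp
    ultimately show "\<exists>d. DERIV ?f x :> d \<and> d \<ge> 0" by blast
  qed
  then show ?thesis by simp
qed

text \<open>The polynomial \<open>y\<^sup>2/2 + y\<^sup>3/6\<close> bounds \<open>y + (1-y) ln(1-y)\<close> from below, and
  \<open>ratio_bound y\<close> is the resulting upper bound for \<open>x(y)/y\<close>.\<close>
definition entropy_poly :: "real \<Rightarrow> real" where
  "entropy_poly y = y^2/2 + y^3/6"

definition ratio_bound :: "real \<Rightarrow> real" where
  "ratio_bound y = (2719/2000) * (1 - entropy_poly y + (entropy_poly y)^2/2)"

lemma entropy_poly_mono: "0 \<le> y0 \<Longrightarrow> y0 \<le> y \<Longrightarrow> entropy_poly y0 \<le> entropy_poly y"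
  unfolding entropy_poly_def by (intro add_mono divide_right_mono power_mono) auto

lemma entropy_poly_range: "0 \<le> y \<Longrightarrow> y \<le> 1 \<Longrightarrow> 0 \<le> entropy_poly y \<and> entropy_poly y \<le> 2/3"
  using entropy_poly_mono[of y 1] by (simp add: entropy_poly_def)

lemma ratio_bound_nonneg: "0 \<le> ratio_bound y"
proof -
  have "1 - entropy_poly y + (entropy_poly y)^2/2 = ((entropy_poly y - 1)^2 + 1)/2"
    by (simp add: algebra_simps power2_eq_square)
  also have "\<dots> \<ge> 0" by simp
  finally show ?thesis unfolding ratio_bound_def by simp
qed

text \<open>\<open>ratio_bound\<close> is decreasing on \<open>[0,1]\<close>, since \<open>z \<mapsto> 1 - z + z\<^sup>2/2\<close> decreases on \<open>[0,1]\<close>.\<close>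
lemma ratio_bound_antimono:
  assumes "0 \<le> y0" "y0 \<le> y" "y \<le> 1" shows "ratio_bound y \<le> ratio_bound y0"
proof -
  let ?w = "entropy_poly y0"
  let ?v = "entropy_poly y"
  have "?w \<le> ?v" "?v \<le> 2/3" "0 \<le> ?w"
    using entropy_poly_mono entropy_poly_range assms by auto
  then have "0 \<le> (?v - ?w) * (1 - (?v + ?w)/2)" by (intro mult_nonneg_nonneg) auto
  also have "\<dots> = (1 - ?w + ?w^2/2) - (1 - ?v + ?v^2/2)"
    by (simp add: field_simps power2_eq_square)
  finally have "1 - ?v + ?v^2/2 \<le> 1 - ?w + ?w^2/2" by linarith
  then show ?thesis unfolding ratio_bound_def by (rule mult_left_mono) simp
qed

lemma argument_le:
  assumes "0 < y" "y \<le> (1::real)"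
  shows "y * exp (1 - y) / (2 * rpow0 (1 - y) (1 - y)) \<le> y * ratio_bound y"
proof (cases "y = 1")
  case True
  then show ?thesis by (simp add: rpow0_def ratio_bound_def entropy_poly_def power2_eq_square)
next
  case False
  let ?z = "entropy_poly y"
  have t: "0 < 1 - y" using False assms by simp
  have "rpow0 (1 - y) (1 - y) = exp ((1 - y) * ln (1 - y))"
    using t by (simp add: rpow0_def powr_def)
  then have arg: "y * exp (1 - y) / (2 * rpow0 (1 - y) (1 - y))
      = y / 2 * exp (1 - y - (1 - y) * ln (1 - y))"
    by (simp add: exp_diff)
  have "1 - y - (1 - y) * ln (1 - y) \<le> 1 + (- ?z)"
    using one_minus_mul_ln_ge[of y] assms t unfolding entropy_poly_def by simp
  then have "exp (1 - y - (1 - y) * ln (1 - y)) \<le> exp 1 * exp (- ?z)"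
    by (simp flip: exp_add)
  also have "\<dots> \<le> (2719/1000) * (1 - ?z + ?z^2/2)"
    using exp_one_le exp_neg_le_quadratic entropy_poly_range[of y] assms
    by (intro mult_mono) auto
  also have "\<dots> = 2 * ratio_bound y" by (simp add: ratio_bound_def)
  finally show ?thesis unfolding arg using assms by (simp add: mult_left_mono)
qed

lemma key_inequality_on_piece:
  assumes "0 \<le> y0" "y0 \<le> y" "y \<le> y1" "y1 \<le> 1"
    and "57/100 * ratio_bound y0 + 43/100 * y1 * (ratio_bound y0)^2 \<le> 1"
  shows "57/100 * ratio_bound y + 43/100 * y * (ratio_bound y)^2 \<le> 1"
proof -
  have w: "ratio_bound y \<le> ratio_bound y0" "0 \<le> ratio_bound y"
    using ratio_bound_antimono ratio_bound_nonneg assms by auto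
  then have "(ratio_bound y)^2 \<le> (ratio_bound y0)^2" by (intro power_mono) auto
  then have "y * (ratio_bound y)^2 \<le> y1 * (ratio_bound y0)^2"
    using assms by (intro mult_mono) auto
  then show ?thesis using w assms by linarith
qed

lemma key_inequality:
  assumes "0 \<le> y" "y \<le> 1"
  shows "57/100 * ratio_bound y + 43/100 * y * (ratio_bound y)^2 \<le> 1"
proof -
  note numerics = ratio_bound_def entropy_poly_def power2_eq_square power3_eq_cube
  consider "y \<le> 28/100" | "28/100 \<le> y \<and> y \<le> 35/100" | "35/100 \<le> y \<and> y \<le> 39/100"
    | "39/100 \<le> y \<and> y \<le> 43/100" | "43/100 \<le> y \<and> y \<le> 47/100" | "47/100 \<le> y \<and> y \<le> 51/100"
    | "51/100 \<le> y \<and> y \<le> 56/100" | "56/100 \<le> y \<and> y \<le> 64/100" | "64/100 \<le> y \<and> y \<le> 80/100"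
    | "80/100 \<le> y" by linarith
  then show ?thesis
  proof cases
    case 1 show ?thesis by (rule key_inequality_on_piece[of "0" _ "28/100"]) (use assms 1 in \<open>auto simp: numerics\<close>)
  next
    case 2 show ?thesis by (rule key_inequality_on_piece[of "28/100" _ "35/100"]) (use assms 2 in \<open>auto simp: numerics\<close>)
  next
    case 3 show ?thesis by (rule key_inequality_on_piece[of "35/100" _ "39/100"]) (use assms 3 in \<open>auto simp: numerics\<close>)
  next
    case 4 show ?thesis by (rule key_inequality_on_piece[of "39/100" _ "43/100"]) (use assms 4 in \<open>auto simp: numerics\<close>)
  next
    case 5 show ?thesis by (rule key_inequality_on_piece[of "43/100" _ "47/100"]) (use assms 5 in \<open>auto simp: numerics\<close>)
  next
    case 6 show ?thesis by (rule key_inequality_on_piece[of "47/100" _ "51/100"]) (use assms 6 in \<open>auto simp: numerics\<close>)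
  next
    case 7 show ?thesis by (rule key_inequality_on_piece[of "51/100" _ "56/100"]) (use assms 7 in \<open>auto simp: numerics\<close>)
  next
    case 8 show ?thesis by (rule key_inequality_on_piece[of "56/100" _ "64/100"]) (use assms 8 in \<open>auto simp: numerics\<close>)
  next
    case 9 show ?thesis by (rule key_inequality_on_piece[of "64/100" _ "80/100"]) (use assms 9 in \<open>auto simp: numerics\<close>)
  next
    case 10 show ?thesis by (rule key_inequality_on_piece[of "80/100" _ "1"]) (use assms 10 in \<open>auto simp: numerics\<close>)
  qed
qed

lemma key_inequality_consequences:
  assumes "0 < y" "y \<le> 1"
  defines "X \<equiv> y * ratio_bound y"
  shows "X \<le> 1" and "57/100 * X + 43/100 * X^2 \<le> y"
proof -
  let ?W = "ratio_bound y"
  have G: "57/100 * ?W + 43/100 * y * ?W^2 \<le> 1" using key_inequality assms by simp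
  have "57/100 * X + 43/100 * X^2 = y * (57/100 * ?W + 43/100 * y * ?W^2)"
    unfolding X_def by (simp add: algebra_simps power2_eq_square)
  also have "\<dots> \<le> y" using G assms by (simp add: mult_left_le)
  finally show q: "57/100 * X + 43/100 * X^2 \<le> y" .
  show "X \<le> 1"
  proof (rule ccontr)
    assume "\<not> X \<le> 1"
    then have "1 < X" by simp
    moreover have "1 < X^2" using \<open>1 < X\<close> by (simp add: one_less_power)
    ultimately show False using q assms by linarith
  qed
qed

theorem lemma5p8:
  fixes a y :: real
  assumes ha: "a > 0" and hroot: "(1 - ln a) / a = 1 / exp 1"
    and hy0: "0 < y" and hy1: "y \<le> 1"
  shows "(1 / y) * psi a (y * exp (1 - y) / (2 * rpow0 (1 - y) (1 - y))) \<le> 1"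
proof -
  define x where "x = y * exp (1 - y) / (2 * rpow0 (1 - y) (1 - y))"
  define X where "X = y * ratio_bound y"
  have x0: "0 \<le> x" using hy0 by (simp add: x_def rpow0_def)
  have xX: "x \<le> X" unfolding x_def X_def by (rule argument_le[OF hy0 hy1])
  have X1: "X \<le> 1" and qX: "57/100 * X + 43/100 * X^2 \<le> y"
    using key_inequality_consequences[OF hy0 hy1] by (simp_all add: X_def)
  have "psi a x \<le> 57/100 * x + 43/100 * x^2"
    using psi_le_q[OF ha ln_root_bounds(1)[OF ha hroot] x0] xX X1 by simp
  also have "\<dots> \<le> 57/100 * X + 43/100 * X^2"
    using x0 xX by (intro add_mono mult_left_mono power_mono) auto
  finally have "psi a x \<le> y" using qX by simp
  then show ?thesis using hy0 by (simp add: x_def)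
qed

end
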